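(* Under the standing setup, for all $t\in(0,1)$ and $x\in\mathbb R^d$, $$\frac{\sigma^2\alpha_t^2}{\alpha_t^2+\sigma^2\beta_t^2}I_d\preceq\mathrm{Cov}(X_1\mid X_t=x)\preceq\frac{\sigma^2\alpha_t^2}{\alpha_t^2+\sigma^2\beta_t^2}I_d+d\Big(\frac{\alpha_t^2}{\alpha_t^2+\sigma^2\beta_t^2}\Big)^2I_d.$$
   Context: Standing setup. Let $d\ge1$, $\mu_0=N(0,I_d)$. There are $\sigma>0$ and a probability measure $\nu$ on $\mathbb R^d$ with a density and $\mathrm{supp}(\nu)\subseteq[0,1]^d$ such that $\mu_1=N(0,\sigma^2I_d)*\nu$. The coefficients $\alpha,\beta:[0,1]\to\mathbb R$ satisfy: $\alpha,\beta\in C([0,1])$; $\alpha(0)=\beta(1)=1$, $\alpha(1)=\beta(0)=0$; $\alpha^2+\beta^2>0$ on $[0,1]$; $\alpha$ nonincreasing, $\beta$ nondecreasing, $\alpha_t,\beta_t>0$ on $(0,1)$; $\dot\alpha,\ddot\alpha\in C([0,1))$, $\alpha\dot\alpha\in C^1([0,1])$, $\dot\beta,\ddot\beta\in C([0,1])$. Let $X_0\sim\mu_0$, $X_1\sim\mu_1$ be independent and $X_t=\alpha_tX_0+\beta_tX_1$. $A\preceq B$ means $B-A$ is positive semidefinite. *)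

theory Defs
  imports "HOL-Probability.Probability"
begin

definition gauss_vec :: "real \<Rightarrow> real^'n \<Rightarrow> real" where
  "gauss_vec s x = (\<Prod>i\<in>UNIV. normal_density 0 s (x $ i))"

text \<open>Density (w.r.t. Lebesgue measure) of mu_1 = N(0, sigma^2 I_d) * nu.\<close>
definition mu1_density :: "real \<Rightarrow> (real^'n) measure \<Rightarrow> real^'n \<Rightarrow> real" where
  "mu1_density \<sigma> \<nu> y = (\<integral>z. gauss_vec \<sigma> (y - z) \<partial>\<nu>)"

text \<open>Joint density of (X_t, X_1) at (x, y), where X_t = alpha_t X_0 + beta_t X_1,
  X_0 ~ N(0, I_d) independent of X_1 ~ mu_1.\<close>
definition joint_density ::
  "(real \<Rightarrow> real) \<Rightarrow> (real \<Rightarrow> real) \<Rightarrow> real \<Rightarrow> (real^'n) measure \<Rightarrow> real \<Rightarrow> real^'n \<Rightarrow> real^'n \<Rightarrow> real" where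
  "joint_density \<alpha> \<beta> \<sigma> \<nu> t x y = mu1_density \<sigma> \<nu> y * gauss_vec (\<alpha> t) (x - \<beta> t *\<^sub>R y)"

definition cond_density ::
  "(real \<Rightarrow> real) \<Rightarrow> (real \<Rightarrow> real) \<Rightarrow> real \<Rightarrow> (real^'n) measure \<Rightarrow> real \<Rightarrow> real^'n \<Rightarrow> real^'n \<Rightarrow> real" where
  "cond_density \<alpha> \<beta> \<sigma> \<nu> t x y =
     joint_density \<alpha> \<beta> \<sigma> \<nu> t x y / (\<integral>y'. joint_density \<alpha> \<beta> \<sigma> \<nu> t x y' \<partial>lborel)"

definition cond_mean ::
  "(real \<Rightarrow> real) \<Rightarrow> (real \<Rightarrow> real) \<Rightarrow> real \<Rightarrow> (real^'n) measure \<Rightarrow> real \<Rightarrow> real^'n \<Rightarrow> real^'n" where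
  "cond_mean \<alpha> \<beta> \<sigma> \<nu> t x = (\<chi> i. \<integral>y. y $ i * cond_density \<alpha> \<beta> \<sigma> \<nu> t x y \<partial>lborel)"

definition cond_cov ::
  "(real \<Rightarrow> real) \<Rightarrow> (real \<Rightarrow> real) \<Rightarrow> real \<Rightarrow> (real^'n) measure \<Rightarrow> real \<Rightarrow> real^'n \<Rightarrow> real^'n^'n" where
  "cond_cov \<alpha> \<beta> \<sigma> \<nu> t x =
     (let m = cond_mean \<alpha> \<beta> \<sigma> \<nu> t x in
      (\<chi> i j. \<integral>y. (y $ i - m $ i) * (y $ j - m $ j) * cond_density \<alpha> \<beta> \<sigma> \<nu> t x y \<partial>lborel))"

definition psd :: "real^'n^'n \<Rightarrow> bool" where
  "psd M \<longleftrightarrow> (\<forall>v. 0 \<le> v \<bullet> (M *v v))"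

definition loewner_le :: "real^'n^'n \<Rightarrow> real^'n^'n \<Rightarrow> bool" (infix "\<preceq>\<^sub>L" 50) where
  "A \<preceq>\<^sub>L B \<longleftrightarrow> psd (B - A)"

end

theory Submission
  imports Defs
begin

text \<open>
  Write \<open>X\<^sub>1 = Z + \<sigma> W\<close> with \<open>Z \<sim> \<nu>\<close> and \<open>W\<close> standard Gaussian. Completing the square
  in the product of Gaussian densities shows that, given \<open>Z = z\<close> and \<open>X\<^sub>t = x\<close>, \<open>X\<^sub>1\<close> is
  Gaussian with covariance \<open>\<rho>\<^sup>2 I\<close>, \<open>\<rho>\<^sup>2 = \<sigma>\<^sup>2\<alpha>\<^sub>t\<^sup>2 / (\<alpha>\<^sub>t\<^sup>2 + \<sigma>\<^sup>2\<beta>\<^sub>t\<^sup>2)\<close>, and with mean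
  \<open>\<kappa> z + c\<close>, \<open>\<kappa> = \<alpha>\<^sub>t\<^sup>2 / (\<alpha>\<^sub>t\<^sup>2 + \<sigma>\<^sup>2\<beta>\<^sub>t\<^sup>2)\<close>. So the law of \<open>X\<^sub>1\<close> given \<open>X\<^sub>t = x\<close> is a
  mixture of these Gaussians, and by the law of total covariance
  \<open>Cov(X\<^sub>1 | X\<^sub>t = x) = \<rho>\<^sup>2 I + \<kappa>\<^sup>2 Cov(Z | X\<^sub>t = x)\<close>. The last covariance is positive
  semidefinite, and it is at most \<open>d I\<close> because \<open>Z\<close> lies in the unit cube.
\<close>

lemma has_bochner_integral_prod_vec_nth:
  fixes \<phi> :: "'n::finite \<Rightarrow> real \<Rightarrow> real"
  assumes "\<And>k. has_bochner_integral lborel (\<phi> k) (I k)"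
  shows "has_bochner_integral lborel (\<lambda>y::real^'n. \<Prod>k\<in>UNIV. \<phi> k (y $ k)) (\<Prod>k\<in>UNIV. I k)"
proof -
  interpret product_sigma_finite "\<lambda>_::real^'n. lborel::real measure" by standard
  define coord :: "real^'n \<Rightarrow> 'n" where "coord b = (THE k. b = axis k 1)" for b
  have coord_axis: "coord (axis k 1) = k" for k
    unfolding coord_def by (rule the_equality) (auto simp: axis_eq_axis)
  have Basis_eq: "(Basis :: (real^'n) set) = range (\<lambda>k. axis k 1)"
    by (auto simp: Basis_vec_def)
  have inj_axis: "inj (\<lambda>k::'n. axis k (1::real))"
    by (auto intro: injI simp: axis_eq_axis)
  have int: "integrable lborel (\<phi> k)" and eq: "integral\<^sup>L lborel (\<phi> k) = I k" for k
    using assms[of k] by (auto simp: has_bochner_integral_iff)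
  have nth_sum: "(\<Sum>b\<in>Basis. g b *\<^sub>R b :: real^'n) $ k = g (axis k 1)" for g k
  proof -
    have "(\<Sum>b\<in>Basis. g b *\<^sub>R b :: real^'n) $ k = (\<Sum>b\<in>Basis. g b * b $ k)"
      by (simp add: sum_component)
    also have "\<dots> = (\<Sum>b\<in>Basis. if b = axis k 1 then g b else 0)"
      by (intro sum.cong) (auto simp: Basis_eq axis_eq_axis axis_def split: if_splits)
    finally show ?thesis by (simp add: Basis_eq)
  qed
  have prod_eq: "(\<Prod>k\<in>UNIV. \<phi> k ((\<Sum>b\<in>Basis. g b *\<^sub>R b) $ k)) = (\<Prod>b\<in>Basis. \<phi> (coord b) (g b))" for g
    unfolding nth_sum by (simp add: Basis_eq prod.reindex[OF inj_axis] coord_axis)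
  have sum_meas: "(\<lambda>g. \<Sum>b\<in>Basis. g b *\<^sub>R b :: real^'n) \<in> measurable (\<Pi>\<^sub>M b\<in>Basis. lborel) borel"
    by measurable
  have prod_meas: "(\<lambda>y::real^'n. \<Prod>k\<in>UNIV. \<phi> k (y $ k)) \<in> borel_measurable borel"
    using int by measurable
  have "integrable (\<Pi>\<^sub>M b\<in>Basis. lborel) (\<lambda>g. \<Prod>b\<in>Basis. \<phi> (coord b) (g b))"
    by (rule product_integrable_prod) (auto intro: int)
  moreover have "(\<integral>g. (\<Prod>b\<in>Basis. \<phi> (coord b) (g b)) \<partial>(\<Pi>\<^sub>M b\<in>Basis. lborel)) = (\<Prod>k\<in>UNIV. I k)"
    by (subst product_integral_prod) (auto intro: int simp: eq Basis_eq prod.reindex[OF inj_axis] coord_axis)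
  ultimately show ?thesis
    by (subst lborel_eq) (simp only: has_bochner_integral_iff integrable_distr_eq[OF sum_meas prod_meas]
        integral_distr[OF sum_meas prod_meas] prod_eq)
qed

lemma has_bochner_integral_normal_density:
  assumes "s > 0"
  shows "has_bochner_integral lborel (normal_density \<mu> s) 1"
  using assms by (simp add: has_bochner_integral_iff)

lemma has_bochner_integral_normal_density_linear:
  assumes "s > 0"
  shows "has_bochner_integral lborel (\<lambda>r. (r - w) * normal_density \<mu> s r) (\<mu> - w)"
proof -
  have "has_bochner_integral lborel (\<lambda>r. normal_density \<mu> s r * r - w * normal_density \<mu> s r) (\<mu> - w * 1)"
    using assms by (intro has_bochner_integral_diff has_bochner_integral_mult_right
        normal_moment_nz_1 has_bochner_integral_normal_density)
  then show ?thesis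
    by (rule has_bochner_integral_cong[THEN iffD1, rotated -1]) (auto simp: algebra_simps)
qed

lemma has_bochner_integral_normal_density_quadratic:
  assumes "s > 0"
  shows "has_bochner_integral lborel (\<lambda>r. (r - w) * (r - w') * normal_density \<mu> s r)
           (s\<^sup>2 + (\<mu> - w) * (\<mu> - w'))"
proof -
  have "has_bochner_integral lborel (\<lambda>r. normal_density \<mu> s r * (r - \<mu>) ^ (2 * 1)) (s\<^sup>2)"
    using normal_moment_even[OF assms, of \<mu> 1] by (simp add: power2_eq_square)
  then have "has_bochner_integral lborel
      (\<lambda>r. normal_density \<mu> s r * (r - \<mu>) ^ 2 + (2 * \<mu> - w - w') * ((r - \<mu>) * normal_density \<mu> s r)
           + (\<mu> - w) * (\<mu> - w') * normal_density \<mu> s r)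
      (s\<^sup>2 + (2 * \<mu> - w - w') * (\<mu> - \<mu>) + (\<mu> - w) * (\<mu> - w') * 1)"
    using assms by (intro has_bochner_integral_add has_bochner_integral_mult_right
        has_bochner_integral_normal_density_linear has_bochner_integral_normal_density) simp_all
  then show ?thesis
    by (rule has_bochner_integral_cong[THEN iffD1, rotated -1]) (auto simp: algebra_simps power2_eq_square)
qed

lemma gauss_vec_diff: "gauss_vec s (y - m) = (\<Prod>k\<in>UNIV. normal_density (m $ k) s (y $ k))"
  by (simp add: gauss_vec_def normal_density_def)

lemma has_bochner_integral_gauss_vec_prod:
  assumes "\<And>k. has_bochner_integral lborel (\<lambda>r. p k r * normal_density (m $ k) s r) (c k)"
  shows "has_bochner_integral lborel (\<lambda>y. (\<Prod>k\<in>UNIV. p k (y $ k)) * gauss_vec s (y - m)) (\<Prod>k\<in>UNIV. c k)"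
  using has_bochner_integral_prod_vec_nth[OF assms] by (simp add: gauss_vec_diff prod.distrib)

lemma has_bochner_integral_gauss_vec:
  assumes "s > 0"
  shows "has_bochner_integral lborel (\<lambda>y. gauss_vec s (y - m)) 1"
  using has_bochner_integral_gauss_vec_prod[of "\<lambda>_ _. 1" m s "\<lambda>_. 1"] assms
  by (simp add: has_bochner_integral_normal_density)

lemma has_bochner_integral_gauss_vec_first_moment:
  assumes "s > 0"
  shows "has_bochner_integral lborel (\<lambda>y. y $ i * gauss_vec s (y - m)) (m $ i)"
proof -
  have "has_bochner_integral lborel (\<lambda>r. (if k = i then r - 0 else 1) * normal_density (m $ k) s r)
      (if k = i then m $ i - 0 else 1)" for k
    using assms has_bochner_integral_normal_density_linear[OF assms, of 0 "m $ i"]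
    by (cases "k = i") (simp_all add: has_bochner_integral_normal_density)
  from has_bochner_integral_gauss_vec_prod[OF this] show ?thesis
    by (simp add: prod.delta)
qed

lemma has_bochner_integral_gauss_vec_second_moment:
  assumes "s > 0"
  shows "has_bochner_integral lborel (\<lambda>y. (y $ i - w) * (y $ j - w') * gauss_vec s (y - m))
           ((if i = j then s\<^sup>2 else 0) + (m $ i - w) * (m $ j - w'))"
proof (cases "i = j")
  case True
  have "has_bochner_integral lborel (\<lambda>r. (if k = i then (r - w) * (r - w') else 1) * normal_density (m $ k) s r)
      (if k = i then s\<^sup>2 + (m $ i - w) * (m $ i - w') else 1)" for k
    using assms by (cases "k = i") (simp_all add: has_bochner_integral_normal_density_quadratic
        has_bochner_integral_normal_density)
  from has_bochner_integral_gauss_vec_prod[OF this] True show ?thesis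
    by (simp add: prod.delta)
next
  case False
  have "has_bochner_integral lborel
      (\<lambda>r. ((if k = i then r - w else 1) * (if k = j then r - w' else 1)) * normal_density (m $ k) s r)
      ((if k = i then m $ i - w else 1) * (if k = j then m $ j - w' else 1))" for k
    using assms False by (cases "k = i"; cases "k = j") (simp_all add: has_bochner_integral_normal_density_linear
        has_bochner_integral_normal_density)
  from has_bochner_integral_gauss_vec_prod[OF this] False show ?thesis
    by (simp add: prod.distrib prod.delta)
qed

lemma has_bochner_integral_gauss_vec_inner_self:
  fixes m :: "real^'n"
  assumes "s > 0"
  shows "has_bochner_integral lborel (\<lambda>y. (y \<bullet> y) * gauss_vec s (y - m)) (real CARD('n) * s\<^sup>2 + m \<bullet> m)"
proof -
  have "has_bochner_integral lborel (\<lambda>y. \<Sum>k\<in>UNIV. (y $ k - 0) * (y $ k - 0) * gauss_vec s (y - m))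
      (\<Sum>k\<in>UNIV. (if k = k then s\<^sup>2 else 0) + (m $ k - 0) * (m $ k - 0))"
    using assms by (intro has_bochner_integral_sum has_bochner_integral_gauss_vec_second_moment)
  then show ?thesis
    by (simp add: inner_vec_def sum.distrib sum_distrib_right)
qed

lemma normal_density_mult_normal_density:
  fixes a b s x y z :: real
  assumes a: "a > 0" and s: "s > 0"
  defines "K \<equiv> a\<^sup>2 + s\<^sup>2 * b\<^sup>2"
  shows "normal_density 0 s (y - z) * normal_density 0 a (x - b * y)
       = normal_density 0 (sqrt K) (x - b * z) * normal_density ((a\<^sup>2 * z + s\<^sup>2 * b * x) / K) (s * a / sqrt K) y"
proof -
  have K: "K > 0" unfolding K_def using a by (simp add: add_pos_nonneg)
  then have sqrt_K: "sqrt K > 0" "(sqrt K)\<^sup>2 = K" by simp_all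
  have "sqrt (2 * pi * s\<^sup>2) * sqrt (2 * pi * a\<^sup>2) = sqrt (2 * pi * (sqrt K)\<^sup>2) * sqrt (2 * pi * (s * a / sqrt K)\<^sup>2)"
    unfolding real_sqrt_mult[symmetric] using sqrt_K by (simp add: field_simps power2_eq_square)
  moreover have "(y - z)\<^sup>2 / (2 * s\<^sup>2) + (x - b * y)\<^sup>2 / (2 * a\<^sup>2)
      = (x - b * z)\<^sup>2 / (2 * (sqrt K)\<^sup>2) + (y - (a\<^sup>2 * z + s\<^sup>2 * b * x) / K)\<^sup>2 / (2 * (s * a / sqrt K)\<^sup>2)"
    using a s K unfolding sqrt_K(2) power_divide power_mult_distrib sqrt_K(2)
    by (simp add: field_simps) (unfold K_def, algebra)
  ultimately show ?thesis
    unfolding normal_density_def by (simp add: exp_add[symmetric] field_simps)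
qed

lemma gauss_vec_mult_gauss_vec:
  fixes a b s :: real and x y z :: "real^'n"
  assumes a: "a > 0" and s: "s > 0"
  defines "K \<equiv> a\<^sup>2 + s\<^sup>2 * b\<^sup>2"
  shows "gauss_vec s (y - z) * gauss_vec a (x - b *\<^sub>R y)
       = gauss_vec (sqrt K) (x - b *\<^sub>R z) * gauss_vec (s * a / sqrt K) (y - ((a\<^sup>2 / K) *\<^sub>R z + (s\<^sup>2 * b / K) *\<^sub>R x))"
proof -
  have "(a\<^sup>2 / K) * z $ k + (s\<^sup>2 * b / K) * x $ k = (a\<^sup>2 * z $ k + s\<^sup>2 * b * x $ k) / K" for k
    by (simp add: add_divide_distrib)
  then show ?thesis
    using normal_density_mult_normal_density[OF a s, of "y $ _" "z $ _" "x $ _" b]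
    unfolding gauss_vec_diff[of _ y] gauss_vec_def prod.distrib[symmetric] K_def
    by (simp add: normal_density_def)
qed

lemma borel_measurable_vec_nth[measurable]: "(\<lambda>y::real^'n. y $ i) \<in> borel_measurable borel"
  by (intro borel_measurable_continuous_onI continuous_intros)

lemma borel_measurable_gauss_vec[measurable]:
  fixes f :: "'a \<Rightarrow> real^'n"
  assumes [measurable]: "f \<in> borel_measurable M"
  shows "(\<lambda>z. gauss_vec r (f z)) \<in> borel_measurable M"
  unfolding gauss_vec_def normal_density_def by measurable

lemma continuous_on_gauss_vec[continuous_intros]:
  fixes f :: "'a::topological_space \<Rightarrow> real^'n"
  assumes "r > 0" "continuous_on S f"
  shows "continuous_on S (\<lambda>z. gauss_vec r (f z))"
  unfolding gauss_vec_def normal_density_def using assms by (intro continuous_intros) auto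

lemma gauss_vec_pos: "s > 0 \<Longrightarrow> 0 < gauss_vec s v"
  unfolding gauss_vec_def by (intro prod_pos) (simp add: normal_density_pos)

lemma integrable_continuous_on_compact_support:
  fixes M :: "'a::topological_space measure" and g :: "'a \<Rightarrow> real"
  assumes "finite_measure M" "compact S" "AE z in M. z \<in> S" "continuous_on S g" "g \<in> borel_measurable M"
  shows "integrable M g"
proof -
  obtain C where "\<And>z. z \<in> S \<Longrightarrow> norm (g z) \<le> C"
    using compact_imp_bounded[OF compact_continuous_image[OF assms(4,2)]] by (auto simp: bounded_iff)
  with assms(3) have "AE z in M. norm (g z) \<le> C"
    by (auto elim: eventually_mono)
  then show ?thesis
    using assms(5) by (rule finite_measure.integrable_const_bound[OF assms(1)])
qed

lemma nth_sq_le_inner_self: "(y $ i)\<^sup>2 \<le> y \<bullet> y"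
  for y :: "real^'n"
  using power_mono[OF component_le_norm_cart[of y i] abs_ge_zero, of 2]
  by (simp add: power2_norm_eq_inner)

lemma abs_nth_le_inner_self: "\<bar>y $ i\<bar> \<le> 1 + y \<bullet> y"
  for y :: "real^'n"
proof -
  have "\<bar>y $ i\<bar> \<le> 1 + (y $ i)\<^sup>2"
    using sum_squares_bound[of 1 "\<bar>y $ i\<bar>"] by simp
  then show ?thesis
    using nth_sq_le_inner_self[of y i] by simp
qed

lemma abs_nth_diff_mult_le_inner_self:
  fixes y :: "real^'n"
  shows "\<bar>(y $ i - p) * (y $ j - q)\<bar> \<le> (2 * p\<^sup>2 + 2 * q\<^sup>2 + 4) * (1 + y \<bullet> y)"
proof -
  have abs_mult_le: "\<bar>u * w\<bar> \<le> u\<^sup>2 + w\<^sup>2" for u w :: real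
  proof -
    have "2 * (\<bar>u\<bar> * \<bar>w\<bar>) \<le> u\<^sup>2 + w\<^sup>2"
      using sum_squares_bound[of "\<bar>u\<bar>" "\<bar>w\<bar>"] by (simp add: mult.assoc)
    then show ?thesis
      unfolding abs_mult using mult_nonneg_nonneg[OF abs_ge_zero abs_ge_zero, of u w] by linarith
  qed
  have diff_sq_le: "(u - c)\<^sup>2 \<le> 2 * u\<^sup>2 + 2 * c\<^sup>2" for u c :: real
    using sum_squares_bound[of u "- c"] by (simp add: power2_diff)
  have "(2 * p\<^sup>2 + 2 * q\<^sup>2 + 4) * (1 + y \<bullet> y)
      = 2 * p\<^sup>2 + 2 * q\<^sup>2 + 4 * (y \<bullet> y) + 4 + (2 * p\<^sup>2 + 2 * q\<^sup>2) * (y \<bullet> y)"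
    by (simp add: algebra_simps)
  moreover have "0 \<le> (2 * p\<^sup>2 + 2 * q\<^sup>2) * (y \<bullet> y)"
    by simp
  ultimately show ?thesis
    using abs_mult_le[of "y $ i - p" "y $ j - q"] diff_sq_le[of "y $ i" p] diff_sq_le[of "y $ j" q]
      nth_sq_le_inner_self[of y i] nth_sq_le_inner_self[of y j]
    by linarith
qed

lemma mem_unit_cube_cart: "z \<in> cbox 0 One \<longleftrightarrow> (\<forall>i. 0 \<le> z $ i \<and> z $ i \<le> 1)"
  for z :: "real^'n"
  by (simp add: mem_box_cart Cart_1[symmetric])

lemma inner_diff_self_le_card_unit_cube:
  fixes z w :: "real^'n"
  assumes "z \<in> cbox 0 One" "w \<in> cbox 0 One"
  shows "(z - w) \<bullet> (z - w) \<le> real CARD('n)"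
proof -
  have "(z $ i - w $ i)\<^sup>2 \<le> 1" for i
  proof -
    have "0 \<le> z $ i" "z $ i \<le> 1" "0 \<le> w $ i" "w $ i \<le> 1"
      using assms by (auto simp: mem_unit_cube_cart)
    then show ?thesis
      by (auto simp: abs_square_le_1 abs_le_iff)
  qed
  then have "(\<Sum>i\<in>UNIV. (z $ i - w $ i)\<^sup>2) \<le> (\<Sum>i\<in>(UNIV::'n set). 1)"
    by (intro sum_mono)
  then show ?thesis
    by (simp add: inner_vec_def power2_eq_square)
qed

lemma quadratic_form_eq_sum:
  fixes A :: "real^'n^'n"
  shows "v \<bullet> (A *v v) = (\<Sum>i\<in>UNIV. \<Sum>j\<in>UNIV. v $ i * v $ j * A $ i $ j)"
  by (simp add: inner_vec_def matrix_vector_mult_def sum_distrib_left algebra_simps)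

lemma inner_power2_eq_sum:
  fixes v w :: "real^'n"
  shows "(v \<bullet> w)\<^sup>2 = (\<Sum>i\<in>UNIV. \<Sum>j\<in>UNIV. v $ i * v $ j * (w $ i * w $ j))"
  by (simp add: inner_vec_def power2_eq_square sum_product algebra_simps)

lemma loewner_le_iff_quadratic_form:
  "A \<preceq>\<^sub>L B \<longleftrightarrow> (\<forall>v. v \<bullet> (A *v v) \<le> v \<bullet> (B *v v))"
  by (simp add: loewner_le_def psd_def matrix_vector_mult_diff_rdistrib inner_diff_right)

lemma quadratic_form_scaleR_mat_1: "v \<bullet> ((c *\<^sub>R mat 1 :: real^'n^'n) *v v) = c * (v \<bullet> v)"
  by (simp add: scaleR_matrix_vector_assoc[symmetric])

text \<open>
  Here \<open>z\<close> is the latent point drawn from \<open>\<nu>\<close>. Given \<open>Z = z\<close>, the observation \<open>X\<^sub>t = x\<close>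
  has density \<open>likelihood z\<close>, and \<open>X\<^sub>1\<close> is Gaussian with mean \<open>post_mean z\<close> and
  coordinate standard deviation \<open>post_sd\<close>; \<open>latent_mean\<close> is \<open>E[Z | X\<^sub>t = x]\<close>.
\<close>

locale gaussian_posterior = prob_space \<nu>
  for \<nu> :: "(real^'n) measure" +
  fixes \<sigma> :: real and \<alpha> \<beta> :: "real \<Rightarrow> real" and t :: real and x :: "real^'n"
  assumes sets_eq_borel: "sets \<nu> = sets borel"
    and AE_mem_cube: "AE z in \<nu>. z \<in> cbox 0 One"
    and \<sigma>_pos: "\<sigma> > 0"
    and \<alpha>_pos: "\<alpha> t > 0"
begin

definition obs_var :: real where
  "obs_var = (\<alpha> t)\<^sup>2 + \<sigma>\<^sup>2 * (\<beta> t)\<^sup>2"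

definition post_sd :: real where
  "post_sd = \<sigma> * \<alpha> t / sqrt obs_var"

definition gain :: real where
  "gain = (\<alpha> t)\<^sup>2 / obs_var"

definition post_mean :: "real^'n \<Rightarrow> real^'n" where
  "post_mean z = gain *\<^sub>R z + (\<sigma>\<^sup>2 * \<beta> t / obs_var) *\<^sub>R x"

definition likelihood :: "real^'n \<Rightarrow> real" where
  "likelihood z = gauss_vec (sqrt obs_var) (x - \<beta> t *\<^sub>R z)"

lemma obs_var_pos: "obs_var > 0"
  unfolding obs_var_def using \<alpha>_pos by (simp add: add_pos_nonneg)

lemma post_sd_pos: "post_sd > 0"
  unfolding post_sd_def using \<sigma>_pos \<alpha>_pos obs_var_pos by simp

lemma post_sd_sq: "post_sd\<^sup>2 = \<sigma>\<^sup>2 * (\<alpha> t)\<^sup>2 / obs_var"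
  unfolding post_sd_def using obs_var_pos by (simp add: power_divide power_mult_distrib)

lemma likelihood_pos: "likelihood z > 0"
  unfolding likelihood_def using obs_var_pos by (simp add: gauss_vec_pos)

lemma borel_measurable_likelihood[measurable]: "likelihood \<in> borel_measurable borel"
  unfolding likelihood_def by measurable

lemma borel_measurable_from_borel: "f \<in> borel_measurable borel \<Longrightarrow> f \<in> borel_measurable \<nu>"
  by (simp add: measurable_cong_sets[OF sets_eq_borel refl])

lemma integrable_likelihood_mult:
  assumes "continuous_on (cbox 0 One) g" and [measurable]: "g \<in> borel_measurable borel"
  shows "integrable \<nu> (\<lambda>z. likelihood z * g z)"
proof (rule integrable_continuous_on_compact_support[OF finite_measure_axioms compact_cbox AE_mem_cube])
  show "continuous_on (cbox 0 One) (\<lambda>z. likelihood z * g z)"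
    unfolding likelihood_def using obs_var_pos assms(1) by (intro continuous_intros) auto
  show "(\<lambda>z. likelihood z * g z) \<in> borel_measurable \<nu>"
    by (rule borel_measurable_from_borel) measurable
qed

lemma joint_density_eq_mixture:
  "joint_density \<alpha> \<beta> \<sigma> \<nu> t x y = (\<integral>z. likelihood z * gauss_vec post_sd (y - post_mean z) \<partial>\<nu>)"
  unfolding joint_density_def mu1_density_def integral_mult_left_zero[symmetric]
  using gauss_vec_mult_gauss_vec[OF \<alpha>_pos \<sigma>_pos, of y _ x "\<beta> t"]
  by (simp add: likelihood_def post_sd_def post_mean_def gain_def obs_var_def mult.commute[of \<sigma>])

lemma has_bochner_integral_quadratic_growth:
  "has_bochner_integral lborel (\<lambda>y. (1 + y \<bullet> y) * gauss_vec post_sd (y - post_mean z))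
     (1 + real CARD('n) * post_sd\<^sup>2 + post_mean z \<bullet> post_mean z)"
proof -
  have "has_bochner_integral lborel
      (\<lambda>y. gauss_vec post_sd (y - post_mean z) + (y \<bullet> y) * gauss_vec post_sd (y - post_mean z))
      (1 + (real CARD('n) * post_sd\<^sup>2 + post_mean z \<bullet> post_mean z))"
    using post_sd_pos
    by (intro has_bochner_integral_add has_bochner_integral_gauss_vec has_bochner_integral_gauss_vec_inner_self)
  then show ?thesis
    by (simp add: distrib_right add.assoc)
qed

context
  fixes \<phi> :: "real^'n \<Rightarrow> real" and C :: real
  assumes \<phi>_measurable[measurable]: "\<phi> \<in> borel_measurable borel"
    and \<phi>_growth: "\<And>y. \<bar>\<phi> y\<bar> \<le> C * (1 + y \<bullet> y)"
begin

lemma integrable_pair_likelihood: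
  "integrable (\<nu> \<Otimes>\<^sub>M lborel) (\<lambda>(z, y). likelihood z * (\<phi> y * gauss_vec post_sd (y - post_mean z)))"
    (is "integrable _ ?F")
proof -
  interpret pair_sigma_finite \<nu> lborel ..
  define bound where "bound z y = likelihood z * (C * ((1 + y \<bullet> y) * gauss_vec post_sd (y - post_mean z)))" for z y
  define g where "g z = likelihood z * (C * (1 + real CARD('n) * post_sd\<^sup>2 + post_mean z \<bullet> post_mean z))" for z
  have bound_integral: "has_bochner_integral lborel (bound z) (g z)" for z
    unfolding bound_def g_def
    by (intro has_bochner_integral_mult_right) (simp add: mult.assoc has_bochner_integral_quadratic_growth)
  have F_le_bound: "norm (?F (z, y)) \<le> bound z y" for z y
    using \<phi>_growth[of y] likelihood_pos[of z] gauss_vec_pos[OF post_sd_pos, of "y - post_mean z"]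
    by (simp add: bound_def abs_mult mult_right_mono)
  have "?F \<in> borel_measurable (borel \<Otimes>\<^sub>M borel)"
    unfolding post_mean_def by measurable
  then have F_measurable: "?F \<in> borel_measurable (\<nu> \<Otimes>\<^sub>M lborel)"
    by (simp add: measurable_cong_sets[OF sets_pair_measure_cong[OF sets_eq_borel sets_lborel] refl])
  have integrable_section: "integrable lborel (\<lambda>y. ?F (z, y))" for z
  proof (rule Bochner_Integration.integrable_bound[where f = "bound z"])
    show "integrable lborel (bound z)"
      using bound_integral by (rule integrable.intros)
    show "(\<lambda>y. ?F (z, y)) \<in> borel_measurable lborel"
      unfolding prod.case post_mean_def by measurable
    show "AE y in lborel. norm (?F (z, y)) \<le> norm (bound z y)"
      using F_le_bound by (auto intro: order_trans[OF _ abs_ge_self])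
  qed
  have "integrable \<nu> g"
    unfolding g_def post_mean_def by (intro integrable_likelihood_mult continuous_intros) measurable
  then have "integrable \<nu> (\<lambda>z. \<integral>y. norm (?F (z, y)) \<partial>lborel)"
  proof (rule Bochner_Integration.integrable_bound)
    show "(\<lambda>z. \<integral>y. norm (?F (z, y)) \<partial>lborel) \<in> borel_measurable \<nu>"
      using F_measurable by measurable
    show "AE z in \<nu>. norm (\<integral>y. norm (?F (z, y)) \<partial>lborel) \<le> norm (g z)"
    proof (intro AE_I2)
      fix z
      have "(\<integral>y. norm (?F (z, y)) \<partial>lborel) \<le> (\<integral>y. bound z y \<partial>lborel)"
        using integrable_section bound_integral F_le_bound
        by (intro integral_mono) (auto intro: integrable.intros)
      then have "(\<integral>y. norm (?F (z, y)) \<partial>lborel) \<le> g z"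
        using has_bochner_integral_integral_eq[OF bound_integral] by simp
      then show "norm (\<integral>y. norm (?F (z, y)) \<partial>lborel) \<le> norm (g z)"
        by simp
    qed
  qed
  then show ?thesis
    using F_measurable integrable_section by (intro Fubini_integrable) auto
qed

lemma integral_joint_density:
  "(\<integral>y. \<phi> y * joint_density \<alpha> \<beta> \<sigma> \<nu> t x y \<partial>lborel)
     = (\<integral>z. likelihood z * (\<integral>y. \<phi> y * gauss_vec post_sd (y - post_mean z) \<partial>lborel) \<partial>\<nu>)"
proof -
  interpret pair_sigma_finite \<nu> lborel ..
  have "\<phi> y * joint_density \<alpha> \<beta> \<sigma> \<nu> t x y
      = (\<integral>z. likelihood z * (\<phi> y * gauss_vec post_sd (y - post_mean z)) \<partial>\<nu>)" for y
    unfolding joint_density_eq_mixture integral_mult_right_zero[symmetric]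
    by (rule Bochner_Integration.integral_cong) (simp_all add: algebra_simps)
  then show ?thesis
    using Fubini_integral[OF integrable_pair_likelihood] by simp
qed

end

definition evidence :: real where
  "evidence = (\<integral>z. likelihood z \<partial>\<nu>)"

definition latent_mean :: "real^'n" where
  "latent_mean = (\<chi> i. (\<integral>z. likelihood z * z $ i \<partial>\<nu>) / evidence)"

lemma integral_joint_density_eq_evidence: "(\<integral>y. joint_density \<alpha> \<beta> \<sigma> \<nu> t x y \<partial>lborel) = evidence"
  using integral_joint_density[of "\<lambda>_. 1" 1]
  by (simp add: evidence_def has_bochner_integral_integral_eq[OF has_bochner_integral_gauss_vec[OF post_sd_pos]])

lemma integrable_likelihood: "integrable \<nu> likelihood"
  using integrable_likelihood_mult[of "\<lambda>_. 1"] by simp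

lemma evidence_pos: "evidence > 0"
proof -
  have "evidence \<ge> 0"
    unfolding evidence_def using likelihood_pos by (simp add: less_imp_le)
  moreover have "evidence \<noteq> 0"
  proof
    assume "evidence = 0"
    then have "AE z in \<nu>. likelihood z = 0"
      using integral_nonneg_eq_0_iff_AE[OF integrable_likelihood] likelihood_pos
      by (simp add: evidence_def less_imp_le)
    then show False
      using likelihood_pos AE_False by (auto elim: eventually_mono simp: less_le)
  qed
  ultimately show ?thesis
    by simp
qed

lemma cond_density_eq: "cond_density \<alpha> \<beta> \<sigma> \<nu> t x y = joint_density \<alpha> \<beta> \<sigma> \<nu> t x y / evidence"
  unfolding cond_density_def integral_joint_density_eq_evidence ..

lemma cond_mean_eq: "cond_mean \<alpha> \<beta> \<sigma> \<nu> t x = post_mean latent_mean"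
unfolding vec_eq_iff
proof
  fix i
  define c where "c = \<sigma>\<^sup>2 * \<beta> t / obs_var * x $ i"
  have growth: "\<bar>y $ i\<bar> \<le> 1 * (1 + y \<bullet> y)" for y :: "real^'n"
    using abs_nth_le_inner_self by simp
  have "cond_mean \<alpha> \<beta> \<sigma> \<nu> t x $ i = (\<integral>y. y $ i * joint_density \<alpha> \<beta> \<sigma> \<nu> t x y \<partial>lborel) / evidence"
    by (simp add: cond_mean_def cond_density_eq)
  also have "(\<integral>y. y $ i * joint_density \<alpha> \<beta> \<sigma> \<nu> t x y \<partial>lborel)
      = (\<integral>z. gain * (likelihood z * z $ i) + c * likelihood z \<partial>\<nu>)"
    using integral_joint_density[OF borel_measurable_vec_nth growth]
    by (simp add: has_bochner_integral_integral_eq[OF has_bochner_integral_gauss_vec_first_moment[OF post_sd_pos]]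
        post_mean_def c_def algebra_simps)
  also have "\<dots> = gain * (\<integral>z. likelihood z * z $ i \<partial>\<nu>) + c * evidence"
    using integrable_likelihood integrable_likelihood_mult[of "\<lambda>z. z $ i"]
    by (simp add: evidence_def continuous_on_component)
  finally show "cond_mean \<alpha> \<beta> \<sigma> \<nu> t x $ i = post_mean latent_mean $ i"
    using evidence_pos by (simp add: post_mean_def latent_mean_def c_def field_simps)
qed

lemma latent_mean_mem_cube: "latent_mean \<in> cbox 0 One"
  unfolding mem_unit_cube_cart
proof
  fix i
  have integrable: "integrable \<nu> (\<lambda>z. likelihood z * z $ i)"
    by (rule integrable_likelihood_mult) (simp_all add: continuous_on_component)
  have "0 \<le> (\<integral>z. likelihood z * z $ i \<partial>\<nu>)"
    using AE_mem_cube likelihood_pos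
    by (intro integral_nonneg_AE) (auto elim!: eventually_mono simp: mem_unit_cube_cart less_imp_le)
  moreover have "(\<integral>z. likelihood z * z $ i \<partial>\<nu>) \<le> evidence"
    unfolding evidence_def using integrable integrable_likelihood
  proof (rule integral_mono_AE)
    show "AE z in \<nu>. likelihood z * z $ i \<le> likelihood z"
      using AE_mem_cube likelihood_pos
      by (auto elim!: eventually_mono simp: mem_unit_cube_cart less_imp_le mult_left_le)
  qed
  ultimately show "0 \<le> latent_mean $ i \<and> latent_mean $ i \<le> 1"
    using evidence_pos by (simp add: latent_mean_def)
qed

lemma cond_cov_nth:
  "cond_cov \<alpha> \<beta> \<sigma> \<nu> t x $ i $ j = (if i = j then post_sd\<^sup>2 else 0)
     + gain\<^sup>2 * (\<integral>z. likelihood z * ((z $ i - latent_mean $ i) * (z $ j - latent_mean $ j)) \<partial>\<nu>) / evidence"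
proof -
  define M where "M = post_mean latent_mean"
  define dev where "dev z = (z $ i - latent_mean $ i) * (z $ j - latent_mean $ j)" for z
  have dev_integrable: "integrable \<nu> (\<lambda>z. likelihood z * dev z)"
    unfolding dev_def by (intro integrable_likelihood_mult continuous_intros) measurable
  have "(\<lambda>y. (y $ i - M $ i) * (y $ j - M $ j)) \<in> borel_measurable borel"
    by measurable
  note integral_moment = integral_joint_density[OF this abs_nth_diff_mult_le_inner_self]
  have "cond_cov \<alpha> \<beta> \<sigma> \<nu> t x $ i $ j
      = (\<integral>y. (y $ i - M $ i) * (y $ j - M $ j) * joint_density \<alpha> \<beta> \<sigma> \<nu> t x y \<partial>lborel) / evidence"
    by (simp add: cond_cov_def Let_def cond_mean_eq cond_density_eq M_def)
  also have "(\<integral>y. (y $ i - M $ i) * (y $ j - M $ j) * joint_density \<alpha> \<beta> \<sigma> \<nu> t x y \<partial>lborel)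
      = (\<integral>z. likelihood z * ((if i = j then post_sd\<^sup>2 else 0)
            + (post_mean z $ i - M $ i) * (post_mean z $ j - M $ j)) \<partial>\<nu>)"
    using integral_moment
    by (simp add: has_bochner_integral_integral_eq[OF has_bochner_integral_gauss_vec_second_moment[OF post_sd_pos]])
  also have "\<dots> = (\<integral>z. (if i = j then post_sd\<^sup>2 else 0) * likelihood z + gain\<^sup>2 * (likelihood z * dev z) \<partial>\<nu>)"
    by (rule Bochner_Integration.integral_cong)
      (simp_all add: M_def post_mean_def dev_def algebra_simps power2_eq_square)
  also have "\<dots> = (if i = j then post_sd\<^sup>2 else 0) * evidence + gain\<^sup>2 * (\<integral>z. likelihood z * dev z \<partial>\<nu>)"
    using integrable_likelihood dev_integrable by (simp add: evidence_def)
  finally show ?thesis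
    using evidence_pos by (simp add: dev_def field_simps)
qed

lemma cond_cov_quadratic_form:
  "v \<bullet> (cond_cov \<alpha> \<beta> \<sigma> \<nu> t x *v v)
     = post_sd\<^sup>2 * (v \<bullet> v) + gain\<^sup>2 * (\<integral>z. likelihood z * (v \<bullet> (z - latent_mean))\<^sup>2 \<partial>\<nu>) / evidence"
proof -
  define E where "E i j = (\<integral>z. likelihood z * ((z $ i - latent_mean $ i) * (z $ j - latent_mean $ j)) \<partial>\<nu>)" for i j
  have "(\<integral>z. likelihood z * (v \<bullet> (z - latent_mean))\<^sup>2 \<partial>\<nu>)
      = (\<integral>z. (\<Sum>i\<in>UNIV. \<Sum>j\<in>UNIV. v $ i * v $ j * (likelihood z * ((z $ i - latent_mean $ i) * (z $ j - latent_mean $ j)))) \<partial>\<nu>)"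
    by (simp add: inner_power2_eq_sum sum_distrib_left mult_ac)
  also have "\<dots> = (\<Sum>i\<in>UNIV. \<Sum>j\<in>UNIV. v $ i * v $ j * E i j)"
  proof -
    have "integrable \<nu> (\<lambda>z. likelihood z * ((z $ i - latent_mean $ i) * (z $ j - latent_mean $ j)))" for i j
      by (intro integrable_likelihood_mult continuous_intros) measurable
    then show ?thesis
      by (simp add: E_def)
  qed
  finally have "(\<integral>z. likelihood z * (v \<bullet> (z - latent_mean))\<^sup>2 \<partial>\<nu>) = (\<Sum>i\<in>UNIV. \<Sum>j\<in>UNIV. v $ i * v $ j * E i j)" .
  moreover have "(\<Sum>i\<in>UNIV. \<Sum>j\<in>UNIV. v $ i * v $ j * (if i = j then post_sd\<^sup>2 else 0)) = post_sd\<^sup>2 * (v \<bullet> v)"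
    by (simp add: inner_vec_def sum_distrib_left mult_ac if_distrib[of "\<lambda>c. _ * c"] cong: if_cong)
  ultimately show ?thesis
    unfolding quadratic_form_eq_sum cond_cov_nth E_def[symmetric]
    by (simp add: distrib_left sum.distrib sum_distrib_left sum_divide_distrib mult_ac)
qed

lemma cond_cov_lower_bound: "post_sd\<^sup>2 * (v \<bullet> v) \<le> v \<bullet> (cond_cov \<alpha> \<beta> \<sigma> \<nu> t x *v v)"
proof -
  have "0 \<le> (\<integral>z. likelihood z * (v \<bullet> (z - latent_mean))\<^sup>2 \<partial>\<nu>)"
    using likelihood_pos by (intro Bochner_Integration.integral_nonneg) (simp add: less_imp_le)
  then show ?thesis
    using evidence_pos by (simp add: cond_cov_quadratic_form)
qed

lemma cond_cov_upper_bound: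
  "v \<bullet> (cond_cov \<alpha> \<beta> \<sigma> \<nu> t x *v v) \<le> (post_sd\<^sup>2 + real CARD('n) * gain\<^sup>2) * (v \<bullet> v)"
proof -
  have "(\<integral>z. likelihood z * (v \<bullet> (z - latent_mean))\<^sup>2 \<partial>\<nu>) \<le> (\<integral>z. likelihood z * (real CARD('n) * (v \<bullet> v)) \<partial>\<nu>)"
  proof (rule integral_mono_AE)
    show "integrable \<nu> (\<lambda>z. likelihood z * (v \<bullet> (z - latent_mean))\<^sup>2)"
      by (intro integrable_likelihood_mult continuous_intros) measurable
    show "integrable \<nu> (\<lambda>z. likelihood z * (real CARD('n) * (v \<bullet> v)))"
      using integrable_likelihood by simp
    show "AE z in \<nu>. likelihood z * (v \<bullet> (z - latent_mean))\<^sup>2 \<le> likelihood z * (real CARD('n) * (v \<bullet> v))"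
      using AE_mem_cube
    proof eventually_elim
      case (elim z)
      have "(v \<bullet> (z - latent_mean))\<^sup>2 \<le> (v \<bullet> v) * ((z - latent_mean) \<bullet> (z - latent_mean))"
        by (rule Cauchy_Schwarz_ineq)
      also have "\<dots> \<le> (v \<bullet> v) * real CARD('n)"
        using inner_diff_self_le_card_unit_cube[OF elim latent_mean_mem_cube] by (simp add: mult_left_mono)
      finally show ?case
        using likelihood_pos[of z] by (simp add: mult_ac)
    qed
  qed
  then have "gain\<^sup>2 * (\<integral>z. likelihood z * (v \<bullet> (z - latent_mean))\<^sup>2 \<partial>\<nu>)
      \<le> gain\<^sup>2 * (real CARD('n) * (v \<bullet> v) * evidence)"
    by (intro mult_left_mono) (simp_all add: evidence_def mult_ac)
  then show ?thesis
    using evidence_pos by (simp add: cond_cov_quadratic_form field_simps)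
qed

end

theorem lemmaD:
  fixes \<alpha> \<beta> d\<alpha> dd\<alpha> d\<beta> dd\<beta> :: "real \<Rightarrow> real"
    and \<sigma> :: real
    and f :: "real^'n \<Rightarrow> ennreal"
    and \<nu> :: "(real^'n) measure"
  assumes \<sigma>_pos: "\<sigma> > 0"
    and \<nu>_def: "\<nu> = density lborel f"
    and f_meas: "f \<in> borel_measurable borel"
    and \<nu>_prob: "prob_space \<nu>"
    and \<nu>_supp: "emeasure \<nu> (- cbox 0 One) = 0"
    and \<alpha>_cont: "continuous_on {0..1} \<alpha>"
    and \<beta>_cont: "continuous_on {0..1} \<beta>"
    and bd: "\<alpha> 0 = 1" "\<beta> 1 = 1" "\<alpha> 1 = 0" "\<beta> 0 = 0"
    and nondeg: "\<And>t. t \<in> {0..1} \<Longrightarrow> (\<alpha> t)\<^sup>2 + (\<beta> t)\<^sup>2 > 0"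
    and \<alpha>_mono: "antimono_on {0..1} \<alpha>"
    and \<beta>_mono: "mono_on {0..1} \<beta>"
    and pos: "\<And>t. t \<in> {0<..<1} \<Longrightarrow> \<alpha> t > 0 \<and> \<beta> t > 0"
    and d\<alpha>: "\<And>t. t \<in> {0..<1} \<Longrightarrow> (\<alpha> has_real_derivative d\<alpha> t) (at t within {0..1})"
    and dd\<alpha>: "\<And>t. t \<in> {0..<1} \<Longrightarrow> (d\<alpha> has_real_derivative dd\<alpha> t) (at t within {0..1})"
    and d\<alpha>_cont: "continuous_on {0..<1} d\<alpha>"
    and dd\<alpha>_cont: "continuous_on {0..<1} dd\<alpha>"
    and \<alpha>d\<alpha>_C1: "\<exists>g g'. (\<forall>t\<in>{0..<1}. g t = \<alpha> t * d\<alpha> t)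
                    \<and> (\<forall>t\<in>{0..1}. (g has_real_derivative g' t) (at t within {0..1}))
                    \<and> continuous_on {0..1} g'"
    and d\<beta>: "\<And>t. t \<in> {0..1} \<Longrightarrow> (\<beta> has_real_derivative d\<beta> t) (at t within {0..1})"
    and dd\<beta>: "\<And>t. t \<in> {0..1} \<Longrightarrow> (d\<beta> has_real_derivative dd\<beta> t) (at t within {0..1})"
    and d\<beta>_cont: "continuous_on {0..1} d\<beta>"
    and dd\<beta>_cont: "continuous_on {0..1} dd\<beta>"
    and t: "t \<in> {0<..<1}"
  shows "((\<sigma>\<^sup>2 * (\<alpha> t)\<^sup>2 / ((\<alpha> t)\<^sup>2 + \<sigma>\<^sup>2 * (\<beta> t)\<^sup>2)) *\<^sub>R mat 1
            \<preceq>\<^sub>L cond_cov \<alpha> \<beta> \<sigma> \<nu> t x)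
       \<and> (cond_cov \<alpha> \<beta> \<sigma> \<nu> t x
            \<preceq>\<^sub>L (\<sigma>\<^sup>2 * (\<alpha> t)\<^sup>2 / ((\<alpha> t)\<^sup>2 + \<sigma>\<^sup>2 * (\<beta> t)\<^sup>2)) *\<^sub>R mat 1
                + (real CARD('n) * ((\<alpha> t)\<^sup>2 / ((\<alpha> t)\<^sup>2 + \<sigma>\<^sup>2 * (\<beta> t)\<^sup>2))\<^sup>2) *\<^sub>R mat 1)"
proof -
  have sets_\<nu>: "sets \<nu> = sets borel"
    using \<nu>_def by simp
  then have "space \<nu> = UNIV"
    using sets_eq_imp_space_eq by fastforce
  then have "AE z in \<nu>. z \<in> cbox 0 One"
    using \<nu>_supp sets_\<nu> by (subst AE_iff_measurable[of "- cbox 0 One"]) auto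
  then interpret gaussian_posterior \<nu> \<sigma> \<alpha> \<beta> t x
    using \<nu>_prob sets_\<nu> \<sigma>_pos pos[OF t]
    by (simp add: gaussian_posterior_def gaussian_posterior_axioms_def)
  have "post_sd\<^sup>2 = \<sigma>\<^sup>2 * (\<alpha> t)\<^sup>2 / ((\<alpha> t)\<^sup>2 + \<sigma>\<^sup>2 * (\<beta> t)\<^sup>2)"
    by (simp add: post_sd_sq obs_var_def)
  moreover have "gain = (\<alpha> t)\<^sup>2 / ((\<alpha> t)\<^sup>2 + \<sigma>\<^sup>2 * (\<beta> t)\<^sup>2)"
    by (simp add: gain_def obs_var_def)
  ultimately show ?thesis
    using cond_cov_lower_bound cond_cov_upper_bound
    by (simp add: loewner_le_iff_quadratic_form matrix_vector_mult_add_rdistrib inner_add_right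
        quadratic_form_scaleR_mat_1 algebra_simps)
qed

end
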